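(* Let $q\geq 2$, $d_1\geq 1$, $d_2\geq 1$ be integers with $\gcd(d_1,d_2)=1$. Then there exists an integer $c$ with $\gcd(c,q-1)=1$ and \[ \gcd(cd_1-d_2,\,q-1)=\begin{cases}2 & \text{if } q,\ d_1,\ d_2 \text{ are all odd},\\ 1 & \text{otherwise}.\end{cases} \] *)

theory Defs
  imports Main
begin

end

theory Submission
  imports Defs "HOL-Number_Theory.Cong"
begin

text \<open>
  Write \<open>q - 1 = 2^k * m\<close> with \<open>m\<close> odd. For an odd prime \<open>p\<close>, one of \<open>c = 1\<close>, \<open>c = 2\<close> makes
  both \<open>c\<close> and \<open>c * d1 - d2\<close> prime to \<open>p\<close>, and the Chinese remainder theorem glues these
  choices into a \<open>c\<close> that works modulo \<open>m\<close>. Modulo 4 we take \<open>c\<close> odd and, when \<open>d1\<close> and \<open>d2\<close>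
  are odd, \<open>c = d1 * (d2 + 2)\<close>: as \<open>d1\<^sup>2 \<equiv> 1 (mod 4)\<close>, this gives \<open>c * d1 - d2 \<equiv> 2 (mod 4)\<close>,
  so the 2-part of the gcd with \<open>q - 1\<close> is exactly 2.
\<close>

lemma exists_affine_not_dvd_prime:
  fixes p d1 d2 :: int
  assumes "prime p" "odd p" "coprime d1 d2"
  shows "\<exists>c. \<not> p dvd c \<and> \<not> p dvd (c * d1 - d2)"
proof -
  have not_dvd_1: "\<not> p dvd 1" and not_dvd_2: "\<not> p dvd 2"
    using assms(1,2) not_prime_unit[of p] prime_ge_2_int[of p] zdvd_imp_le[of p 2] by auto
  consider "p dvd d1" | "\<not> p dvd d1" "p dvd (d1 - d2)" | "\<not> p dvd (d1 - d2)" by blast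
  then show ?thesis
  proof cases
    case 1
    then have "\<not> p dvd d2"
      using assms(1,3) coprime_common_divisor not_prime_unit by blast
    with 1 have "\<not> p dvd (1 * d1 - d2)" by (simp add: dvd_diff_right_iff)
    with not_dvd_1 show ?thesis by blast
  next
    case 2
    have "2 * d1 - d2 = d1 + (d1 - d2)" by simp
    with 2 have "\<not> p dvd (2 * d1 - d2)" by (metis dvd_add_left_iff)
    with not_dvd_2 show ?thesis by blast
  next
    case 3
    with not_dvd_1 show ?thesis by auto
  qed
qed

lemma cong_affine:
  fixes c c' d1 d2 n :: int
  shows "[c = c'] (mod n) \<Longrightarrow> [c * d1 - d2 = c' * d1 - d2] (mod n)"
  by (intro cong_diff cong_mult cong_refl)

lemma exists_affine_coprime_mult:
  fixes a b c1 c2 d1 d2 :: int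
  assumes "coprime a b"
    and "coprime c1 a" "coprime (c1 * d1 - d2) a"
    and "coprime c2 b" "coprime (c2 * d1 - d2) b"
  shows "\<exists>c. coprime c (a * b) \<and> coprime (c * d1 - d2) (a * b)"
proof -
  obtain c where ca: "[c = c1] (mod a)" and cb: "[c = c2] (mod b)"
    using binary_chinese_remainder_int[OF assms(1)] by blast
  with assms(2-5) show ?thesis
    by (metis cong_affine coprime_cong_cong_left coprime_mult_right_iff)
qed

lemma exists_affine_coprime_odd:
  fixes m d1 d2 :: int
  assumes "odd m" "coprime d1 d2"
  shows "\<exists>c. coprime c m \<and> coprime (c * d1 - d2) m"
  using assms(1)
proof (induction m rule: prime_divisors_induct)
  case zero
  then show ?case by simp
next
  case (unit m)
  then show ?case by (blast intro: is_unit_right_imp_coprime)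
next
  case (factor p m)
  then have "odd p" "odd m" by auto
  with factor.IH obtain c' where c': "coprime c' m" "coprime (c' * d1 - d2) m" by blast
  show ?case
  proof (cases "p dvd m")
    case True
    with c' have "coprime c' p" "coprime (c' * d1 - d2) p"
      by (meson coprime_divisors dvd_refl)+
    with c' show ?thesis by auto
  next
    case False
    with factor.hyps have "coprime p m" by (rule prime_imp_coprime)
    moreover obtain cp where "\<not> p dvd cp" "\<not> p dvd (cp * d1 - d2)"
      using exists_affine_not_dvd_prime[OF factor.hyps \<open>odd p\<close> assms(2)] by blast
    then have "coprime cp p" "coprime (cp * d1 - d2) p"
      using factor.hyps prime_imp_coprime coprime_commute by blast+
    ultimately show ?thesis
      using exists_affine_coprime_mult c' by blast
  qed
qed

lemma exists_odd_affine_cong_2_mod_4: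
  fixes d1 d2 :: int
  assumes "odd d1" "odd d2"
  shows "\<exists>c. odd c \<and> [c * d1 - d2 = 2] (mod 4)"
proof (intro exI conjI)
  show "odd (d1 * (d2 + 2))" using assms by simp
  obtain a where a: "d1 = 2 * a + 1" using assms(1) oddE by blast
  have "d1 * (d2 + 2) * d1 - d2 = 2 + 4 * ((a * a + a) * (d2 + 2))"
    unfolding a by (simp add: algebra_simps)
  then show "[d1 * (d2 + 2) * d1 - d2 = 2] (mod 4)"
    by (simp add: cong_iff_dvd_diff)
qed

lemma gcd_eq_2_if_cong_2_mod_4:
  fixes x m :: int and k :: nat
  assumes "[x = 2] (mod 4)" "coprime x m" "k \<ge> 1"
  shows "gcd x (2 ^ k * m) = 2"
proof -
  obtain y where "x - 2 = 4 * y"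
    using assms(1) by (metis cong_iff_dvd_diff dvd_def)
  then have x: "x = 2 * (1 + 2 * y)" by simp
  have "coprime (1 + 2 * y) m"
    using assms(2) unfolding x by (simp only: coprime_mult_left_iff)
  moreover obtain j where "k = Suc j" using assms(3) by (cases k) auto
  then have "gcd x (2 ^ k * m) = 2 * gcd (1 + 2 * y) (2 ^ j * m)"
    using gcd_mult_distrib_int[of 2 "1 + 2 * y" "2 ^ j * m"] by (simp add: x mult.assoc)
  ultimately show ?thesis by simp
qed

lemma exists_affine_coprime_odd_cong_2_mod_4:
  fixes m d1 d2 :: int
  assumes "odd m" "coprime d1 d2"
  obtains c where "odd c" "coprime c m" "coprime (c * d1 - d2) m"
    and "odd d1 \<and> odd d2 \<Longrightarrow> [c * d1 - d2 = 2] (mod 4)"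
proof -
  obtain c1 where c1: "coprime c1 m" "coprime (c1 * d1 - d2) m"
    using exists_affine_coprime_odd[OF assms] by blast
  obtain c2 where c2: "odd c2" "odd d1 \<and> odd d2 \<Longrightarrow> [c2 * d1 - d2 = 2] (mod 4)"
  proof (cases "odd d1 \<and> odd d2")
    case True
    with exists_odd_affine_cong_2_mod_4 that show ?thesis by blast
  next
    case False
    with that[of 1] show ?thesis by simp
  qed
  have "coprime m (2 ^ 2)"
    using assms(1) by (simp only: coprime_power_right_iff coprime_right_2_iff_odd) simp
  then have "coprime m 4" by simp
  then obtain c where cm: "[c = c1] (mod m)" and c4: "[c = c2] (mod 4)"
    using binary_chinese_remainder_int by blast
  have "[c = c2] (mod 2)" using c4 by (rule cong_dvd_modulus) simp
  with c2(1) have "odd c" by (simp add: cong_def odd_iff_mod_2_eq_one)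
  moreover have "coprime c m" "coprime (c * d1 - d2) m"
    using c1 coprime_cong_cong_left[OF cm] coprime_cong_cong_left[OF cong_affine[OF cm]] by blast+
  moreover have "[c * d1 - d2 = 2] (mod 4)" if "odd d1 \<and> odd d2"
    using cong_trans[OF cong_affine[OF c4] c2(2)[OF that]] .
  ultimately show ?thesis using that by blast
qed

lemma two_power_odd_decomposition:
  fixes n :: int
  assumes "n \<noteq> 0"
  obtains k m where "n = 2 ^ k * m" "odd m"
proof -
  from assms obtain m where "n = 2 ^ multiplicity 2 n * m" "odd m"
    by (rule multiplicity_decompose') auto
  then show ?thesis using that by blast
qed

theorem lemma4p2:
  fixes q d1 d2 :: int
  assumes "q \<ge> 2" and "d1 \<ge> 1" and "d2 \<ge> 1" and "gcd d1 d2 = 1"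
  shows "\<exists>c::int. gcd c (q - 1) = 1 \<and>
           gcd (c * d1 - d2) (q - 1) = (if odd q \<and> odd d1 \<and> odd d2 then 2 else 1)"
proof -
  obtain k m where q1: "q - 1 = 2 ^ k * m" and "odd m"
    using two_power_odd_decomposition[of "q - 1"] assms(1) by auto
  have "odd q \<longleftrightarrow> even (q - 1)" by simp
  with \<open>odd m\<close> have odd_q_iff: "odd q \<longleftrightarrow> k \<noteq> 0" by (simp add: q1)
  have "coprime d1 d2" using assms(4) by (simp add: coprime_iff_gcd_eq_1)
  then obtain c where "odd c" "coprime c m" "coprime (c * d1 - d2) m"
    and c_mod_4: "odd d1 \<and> odd d2 \<Longrightarrow> [c * d1 - d2 = 2] (mod 4)"
    using exists_affine_coprime_odd_cong_2_mod_4 \<open>odd m\<close> by metis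
  show ?thesis
  proof (intro exI conjI)
    show "gcd c (q - 1) = 1"
      using \<open>coprime c m\<close> \<open>odd c\<close> by (simp add: q1 flip: coprime_iff_gcd_eq_1)
    show "gcd (c * d1 - d2) (q - 1) = (if odd q \<and> odd d1 \<and> odd d2 then 2 else 1)"
    proof (cases "odd q \<and> odd d1 \<and> odd d2")
      case True
      then show ?thesis
        using gcd_eq_2_if_cong_2_mod_4 c_mod_4 \<open>coprime (c * d1 - d2) m\<close> odd_q_iff
        by (simp add: q1 Suc_le_eq)
    next
      case False
      have "\<not> (even d1 \<and> even d2)"
        using \<open>coprime d1 d2\<close> by (auto dest: coprime_common_divisor[of d1 d2 2])
      with False \<open>odd c\<close> odd_q_iff have "k = 0 \<or> odd (c * d1 - d2)" by auto
      with \<open>coprime (c * d1 - d2) m\<close> False show ?thesis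
        by (auto simp: q1 coprime_iff_gcd_eq_1[symmetric])
    qed
  qed
qed

end
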